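(* Let $F:X\to [0,\infty]$ be measurable, and such that $\mathrm{zer}F:=\{z\in X\mid F(z)=0\}$ is a closed non-empty set. Further, let $\phi:X\times X\to [0,\infty)$ be a Carath\'eodory distance. Let $(\mathsf{F}_n)$ be a filtration and let $(x_n)$ be an $X$-valued stochastic process adapted to $(\mathsf{F}_n)$ such that: (1) $(x_n)$ is stochastically $\phi$-quasi-Fej\'er monotone w.r.t.\ $\mathrm{zer}F$ and $(\mathsf{F}_n)$ with error sequences $(\zeta_n),(\xi_n)\in\ell^1_+(\mathsf{F}_n)$, i.e.\ $\mathbb{E}[\phi(z,x_{n+1})\mid\mathsf{F}_n]\leq (1+\zeta_n)\phi(z,x_n)+\xi_n$ a.s.\ for all $n\in\mathbb{N}$ and all $z\in\mathrm{zer}F$, where $K>0$ is a uniform almost-sure bound for $\prod_{n=0}^\infty (1+\zeta_n)<\infty$ (i.e.\ $\prod_{n=0}^\infty (1+\zeta_n)<K$ a.s.) and $\chi:(0,\infty)\to\mathbb{N}$ is a rate of convergence for $\sum_{n=0}^\infty \mathbb{E}[\xi_n]<\infty$, i.e.\ $\sum_{n=\chi(\varepsilon)}^\infty \mathbb{E}[\xi_n]<\varepsilon$ for all $\varepsilon>0$. (2) $(x_n)$ has the $\liminf$-property in mean w.r.t.\ $F$ with a $\liminf$-bound $\varphi:(0,\infty)\times\mathbb{N}\to (0,\infty)$, i.e.\ $\forall \varepsilon>0\ \forall N\in\mathbb{N}\ \exists n\in [N;\varphi(\varepsilon,N)]\,(\mathbb{E}[F(x_n)]<\varepsilon)$. Lastly,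 let $\tau:(0,\infty)\to (0,\infty)$ be a modulus of $\phi$-regularity for $F$ in mean w.r.t.\ $D$, i.e.\ $\forall \varepsilon>0\ \forall x\in D\,(\mathbb{E}[F(x)]<\tau(\varepsilon)\to \mathbb{E}[\mathrm{dist}^\phi_{\mathrm{zer}F}(x)]<\varepsilon)$, where $D$ is a collection of $X$-valued random variables with $(x_n)\subseteq D$. Then $\mathrm{dist}^\phi_{\mathrm{zer}F}(x_n)\to 0$ in mean and a.s., with rates \[ \forall\varepsilon>0\ \forall n\geq \rho(\varepsilon)\left(\mathbb{E}[\mathrm{dist}^\phi_{\mathrm{zer}F}(x_n)]<\varepsilon\right) \] as well as \[ \forall \lambda,\varepsilon>0\left(\mathbb{P}(\exists n\geq \rho(\lambda\varepsilon) (\mathrm{dist}^\phi_{\mathrm{zer}F}(x_n)\geq\varepsilon))< \lambda\right) \] where $\rho(\varepsilon):=\varphi\left(\tau\left(\varepsilon/3K\right),\chi\left(\varepsilon/3K\right)\right)$. If $\phi$ is uniformly consistent with a modulus $\theta:[0,\infty)\to [0,\infty)$ (i.e.\ $\phi(x,y)<\theta(\varepsilon)\to d(x,y)<\varepsilon$ for all $\varepsilon>0$, $x,y\in X$) which is nondecreasing and convex with $\theta(0)=0$ and $\theta(\varepsilon)>0$ for $\varepsilon>0$, then we further have $\mathrm{dist}_{\mathrm{zer}F}(x_n)\to 0$ in mean and a.s., with rates $\rho(\theta(\varepsilon))$ and $\rho(\lambda\theta(\varepsilon))$ respectively.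
   Context: Throughout, $(\Omega,\mathsf{F},\mathbb{P})$ is a probability space and $(X,d)$ a separable complete metric space with its Borel $\sigma$-algebra. A Carath\'eodory distance is a function $\phi:X\times X\to[0,\infty)$ that is continuous in its left argument and measurable in its right argument. For non-empty $S\subseteq X$, $\mathrm{dist}^\phi_S(x):=\inf_{s\in S}\phi(s,x)$ and $\mathrm{dist}_S=\mathrm{dist}^d_S$. $\ell^1_+(\mathsf{F}_n)$ denotes the set of sequences of nonnegative random variables adapted to $(\mathsf{F}_n)$ that are a.s.\ summable. $[N;M]$ denotes the integer interval from $N$ to $M$. *)

theory Defs
  imports "HOL-Probability.Probability"
begin

definition is_filtration :: "'o measure \<Rightarrow> (nat \<Rightarrow> 'o measure) \<Rightarrow> bool" where
  "is_filtration M Fs \<longleftrightarrow> (\<forall>n. subalgebra M (Fs n)) \<and> (\<forall>n. sets (Fs n) \<subseteq> sets (Fs (Suc n)))"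

definition l1plus :: "'o measure \<Rightarrow> (nat \<Rightarrow> 'o measure) \<Rightarrow> (nat \<Rightarrow> 'o \<Rightarrow> real) \<Rightarrow> bool" where
  "l1plus M Fs z \<longleftrightarrow> (\<forall>n. z n \<in> borel_measurable (Fs n)) \<and>
     (\<forall>n. \<forall>\<omega>\<in>space M. 0 \<le> z n \<omega>) \<and> (AE \<omega> in M. summable (\<lambda>n. z n \<omega>))"

definition caratheodory_distance :: "('a::metric_space \<Rightarrow> 'a \<Rightarrow> real) \<Rightarrow> bool" where
  "caratheodory_distance \<phi> \<longleftrightarrow> (\<forall>x y. 0 \<le> \<phi> x y) \<and>
     (\<forall>y. continuous_on UNIV (\<lambda>x. \<phi> x y)) \<and> (\<forall>x. (\<lambda>y. \<phi> x y) \<in> borel_measurable borel)"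

definition distphi :: "('a \<Rightarrow> 'a \<Rightarrow> real) \<Rightarrow> 'a set \<Rightarrow> 'a \<Rightarrow> real" where
  "distphi \<phi> S x = (INF s\<in>S. \<phi> s x)"

end

theory Submission
  imports Defs
begin

text \<open>Dividing the \<open>\<phi>\<close>-distance to \<open>zer F\<close> by the partial products \<open>\<Prod>k<n. 1 + \<zeta> k\<close> turns
  quasi-Fejer monotonicity into an almost-supermartingale with additive errors \<open>E[\<xi> n]\<close>.  Hence
  from any index \<open>m\<close> on, the mean distance stays below \<open>K (E[dist m] + (\<Sum>i\<ge>m. E[\<xi> i]))\<close>, and a
  Ville-type maximal inequality bounds the probability that the distance ever exceeds \<open>\<epsilon>\<close> by the
  same quantity divided by \<open>\<epsilon>\<close>.  The liminf bound, the regularity modulus and the rate for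
  \<open>\<Sum> E[\<xi> n]\<close> supply such an \<open>m \<le> \<rho> \<epsilon>\<close> with both terms below \<open>\<epsilon> / 3K\<close>.  For the metric
  distance, a supporting line of the convex modulus \<open>\<theta>\<close> at \<open>\<epsilon>\<close> transfers the mean bounds and
  monotonicity of \<open>\<theta>\<close> transfers the tail bounds.\<close>

lemma suminf_shift_mono_ennreal:
  fixes f :: "nat \<Rightarrow> ennreal"
  assumes "a \<le> b"
  shows "(\<Sum>i. f (i + b)) \<le> (\<Sum>i. f (i + a))"
proof -
  have "(\<Sum>i. f (i + a)) = (\<Sum>i. f (i + (b - a) + a)) + (\<Sum>i<b - a. f (i + a))"
    by (rule suminf_offset) (rule summableI)
  also have "\<dots> = (\<Sum>i. f (i + b)) + (\<Sum>i<b - a. f (i + a))"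
    using assms by (simp add: algebra_simps)
  finally show ?thesis
    by simp
qed

lemma divide_prod_affine_le:
  fixes P z d e :: real
  assumes "1 \<le> P" "0 \<le> z" "0 \<le> e"
  shows "((1 + z) * d + e) / (P * (1 + z)) \<le> d / P + e"
proof -
  have "1 \<le> P * (1 + z)"
    using assms by (metis le_add_same_cancel1 mult_mono' mult.right_neutral order_trans zero_le_one)
  then have "e / (P * (1 + z)) \<le> e"
    using assms by (simp add: divide_le_eq mult_le_cancel_left1)
  moreover have "((1 + z) * d + e) / (P * (1 + z)) = d / P + e / (P * (1 + z))"
    using assms by (simp add: add_divide_distrib)
  ultimately show ?thesis
    by simp
qed

lemma ennreal_le_affine_INF:
  fixes N :: ennreal and f :: "'b \<Rightarrow> real"
  assumes le: "\<And>c. c \<in> C \<Longrightarrow> N \<le> ennreal (a * f c + b)"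
    and "C \<noteq> {}" and f: "\<And>c. c \<in> C \<Longrightarrow> 0 \<le> f c" and "0 < a" and "0 \<le> b"
  shows "N \<le> ennreal (a * (INF c\<in>C. f c) + b)"
proof (rule ennreal_le_epsilon)
  fix \<delta> :: real assume "0 < \<delta>"
  let ?I = "INF c\<in>C. f c"
  have "0 \<le> ?I"
    using \<open>C \<noteq> {}\<close> f by (intro cINF_greatest) auto
  have "?I < ?I + \<delta> / a"
    using \<open>0 < \<delta>\<close> \<open>0 < a\<close> by simp
  moreover have "bdd_below (f ` C)"
    using f by (meson bdd_belowI2)
  ultimately obtain c where "c \<in> C" and "f c < ?I + \<delta> / a"
    using cINF_less_iff[OF \<open>C \<noteq> {}\<close>] by blast
  then have "a * f c + b \<le> (a * ?I + b) + \<delta>"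
    using \<open>0 < a\<close> by (simp add: field_simps)
  then have "N \<le> ennreal ((a * ?I + b) + \<delta>)"
    using le[OF \<open>c \<in> C\<close>] by (meson ennreal_leI order_trans)
  then show "N \<le> ennreal (a * ?I + b) + ennreal \<delta>"
    using \<open>0 \<le> ?I\<close> \<open>0 < a\<close> \<open>0 \<le> b\<close> \<open>0 < \<delta>\<close> by simp
qed

lemma convex_on_supporting_line:
  fixes \<theta> :: "real \<Rightarrow> real"
  assumes convex: "convex_on {0..} \<theta>" and "0 < \<epsilon>"
  shows "\<exists>s. (\<theta> \<epsilon> - \<theta> 0) / \<epsilon> \<le> s \<and> (\<forall>t\<ge>0. \<theta> \<epsilon> + s * (t - \<epsilon>) \<le> \<theta> t)"
proof -
  define slope where "slope t = (\<theta> t - \<theta> \<epsilon>) / (t - \<epsilon>)" for t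
  have slope_mono: "slope t \<le> slope u" if "0 \<le> t" "t < \<epsilon>" "\<epsilon> < u" for t u
  proof -
    have "slope t \<le> (\<theta> \<epsilon> - \<theta> u) / (\<epsilon> - u)"
      using convex_on_slope_le[OF convex, of t u \<epsilon>] that by (auto simp: slope_def)
    also have "\<dots> = slope u"
      unfolding slope_def by (metis minus_diff_eq minus_divide_divide)
    finally show ?thesis .
  qed
  define s where "s = (SUP t\<in>{0..<\<epsilon>}. slope t)"
  have bdd: "bdd_above (slope ` {0..<\<epsilon>})"
    using slope_mono[of _ "2 * \<epsilon>"] \<open>0 < \<epsilon>\<close> by (auto intro!: bdd_aboveI2)
  have left: "slope t \<le> s" if "0 \<le> t" "t < \<epsilon>" for t
    unfolding s_def using that bdd by (intro cSUP_upper) auto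
  have right: "s \<le> slope u" if "\<epsilon> < u" for u
    unfolding s_def using that \<open>0 < \<epsilon>\<close> slope_mono by (intro cSUP_least) auto
  have "\<theta> \<epsilon> + s * (t - \<epsilon>) \<le> \<theta> t" if "0 \<le> t" for t
  proof (cases t \<epsilon> rule: linorder_cases)
    case less
    then show ?thesis
      using left[OF that less] by (simp add: slope_def divide_simps algebra_simps)
  next
    case greater
    then show ?thesis
      using right[OF greater] by (simp add: slope_def divide_simps algebra_simps)
  qed simp
  moreover have "(\<theta> \<epsilon> - \<theta> 0) / \<epsilon> \<le> s"
    using left[of 0] \<open>0 < \<epsilon>\<close> by (simp add: slope_def minus_divide_left)
  ultimately show ?thesis
    by blast
qed

section \<open>Transferring rates of convergence\<close>

lemma (in prob_space) nn_integral_less_of_convex_minorant: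
  fixes \<theta> :: "real \<Rightarrow> real" and u v :: "'a \<Rightarrow> real"
  assumes convex: "convex_on {0..} \<theta>" and "\<theta> 0 = 0" and "0 < \<epsilon>" and "0 < \<theta> \<epsilon>"
    and v: "v \<in> borel_measurable M" "\<And>\<omega>. \<omega> \<in> space M \<Longrightarrow> 0 \<le> v \<omega>"
    and u: "\<And>\<omega>. \<omega> \<in> space M \<Longrightarrow> 0 \<le> u \<omega>"
    and minorant: "\<And>\<omega>. \<omega> \<in> space M \<Longrightarrow> \<theta> (u \<omega>) \<le> v \<omega>"
    and small: "(\<integral>\<^sup>+\<omega>. ennreal (v \<omega>) \<partial>M) < ennreal (\<theta> \<epsilon>)"
  shows "(\<integral>\<^sup>+\<omega>. ennreal (u \<omega>) \<partial>M) < ennreal \<epsilon>"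
proof -
  obtain s where s: "\<theta> \<epsilon> / \<epsilon> \<le> s" "\<And>t. 0 \<le> t \<Longrightarrow> \<theta> \<epsilon> + s * (t - \<epsilon>) \<le> \<theta> t"
    using convex_on_supporting_line[OF convex \<open>0 < \<epsilon>\<close>] \<open>\<theta> 0 = 0\<close> by auto
  have "0 < s"
    using s(1) \<open>0 < \<epsilon>\<close> \<open>0 < \<theta> \<epsilon>\<close> by (meson divide_pos_pos less_le_trans)
  define a where "a = \<epsilon> - \<theta> \<epsilon> / s"
  have "0 \<le> a"
    using s(1) \<open>0 < s\<close> \<open>0 < \<epsilon>\<close> by (simp add: a_def field_simps)
  have "ennreal (u \<omega>) \<le> ennreal a + ennreal (1 / s) * ennreal (v \<omega>)" if "\<omega> \<in> space M" for \<omega>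
  proof -
    have "\<theta> \<epsilon> + s * (u \<omega> - \<epsilon>) \<le> v \<omega>"
      using s(2)[OF u[OF that]] minorant[OF that] by linarith
    then have "u \<omega> \<le> a + 1 / s * v \<omega>"
      using \<open>0 < s\<close> by (simp add: a_def field_simps)
    then have "ennreal (u \<omega>) \<le> ennreal (a + 1 / s * v \<omega>)"
      by (rule ennreal_leI)
    also have "\<dots> = ennreal a + ennreal (1 / s) * ennreal (v \<omega>)"
      using \<open>0 \<le> a\<close> \<open>0 < s\<close> v(2)[OF that] by (simp add: ennreal_mult'[symmetric])
    finally show ?thesis .
  qed
  then have "(\<integral>\<^sup>+\<omega>. ennreal (u \<omega>) \<partial>M) \<le> (\<integral>\<^sup>+\<omega>. ennreal a + ennreal (1 / s) * ennreal (v \<omega>) \<partial>M)"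
    by (rule nn_integral_mono)
  also have "\<dots> = ennreal a + ennreal (1 / s) * (\<integral>\<^sup>+\<omega>. ennreal (v \<omega>) \<partial>M)"
    using v(1) by (simp add: nn_integral_add nn_integral_cmult emeasure_space_1)
  also have "\<dots> < ennreal a + ennreal (1 / s) * ennreal (\<theta> \<epsilon>)"
    using small \<open>0 < s\<close> by (simp add: ennreal_mult_strict_left_mono)
  also have "\<dots> = ennreal (a + \<theta> \<epsilon> / s)"
    using \<open>0 \<le> a\<close> \<open>0 < s\<close> \<open>0 < \<theta> \<epsilon>\<close> by (simp add: ennreal_mult'[symmetric])
  also have "\<dots> = ennreal \<epsilon>"
    by (simp add: a_def)
  finally show ?thesis .
qed

lemma (in prob_space) AE_tendsto_0_of_tail_prob:
  fixes u :: "nat \<Rightarrow> 'a \<Rightarrow> real"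
  assumes meas [measurable]: "\<And>n. u n \<in> borel_measurable M"
    and nonneg: "\<And>n \<omega>. \<omega> \<in> space M \<Longrightarrow> 0 \<le> u n \<omega>"
    and tail: "\<And>lam \<epsilon>. 0 < lam \<Longrightarrow> 0 < \<epsilon> \<Longrightarrow> \<exists>N. prob {\<omega>\<in>space M. \<exists>n\<ge>N. \<epsilon> \<le> u n \<omega>} < lam"
  shows "AE \<omega> in M. (\<lambda>n. u n \<omega>) \<longlonglongrightarrow> 0"
proof -
  have eventually_small: "AE \<omega> in M. \<exists>N. \<forall>n\<ge>N. u n \<omega> < \<epsilon>" if "0 < \<epsilon>" for \<epsilon>
  proof -
    let ?B = "{\<omega>\<in>space M. \<forall>N. \<exists>n\<ge>N. \<epsilon> \<le> u n \<omega>}"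
    have B: "?B \<in> sets M"
      by measurable
    have small: "prob ?B \<le> lam" if "0 < lam" for lam
    proof -
      obtain N where "prob {\<omega>\<in>space M. \<exists>n\<ge>N. \<epsilon> \<le> u n \<omega>} < lam"
        using tail[OF \<open>0 < lam\<close> \<open>0 < \<epsilon>\<close>] by blast
      moreover have "prob ?B \<le> prob {\<omega>\<in>space M. \<exists>n\<ge>N. \<epsilon> \<le> u n \<omega>}"
        by (rule finite_measure_mono) (auto, measurable)
      ultimately show ?thesis
        by simp
    qed
    have "prob ?B = 0"
      using small by (meson dense measure_le_0_iff not_le)
    then show ?thesis
      by (subst AE_iff_measurable[OF B]) (auto simp: emeasure_eq_measure not_less)
  qed
  have "AE \<omega> in M. \<forall>k::nat. \<exists>N. \<forall>n\<ge>N. u n \<omega> < inverse (Suc k)"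
    unfolding AE_all_countable by (intro allI eventually_small) simp
  then show ?thesis
    using AE_space
  proof eventually_elim
    case (elim \<omega>)
    show ?case
    proof (rule order_tendstoI)
      show "\<forall>\<^sub>F n in sequentially. a < u n \<omega>" if "a < 0" for a
        using that nonneg[OF elim(2)] by (simp add: less_le_trans)
      show "\<forall>\<^sub>F n in sequentially. u n \<omega> < a" if "0 < a" for a
      proof -
        obtain k where "inverse (real (Suc k)) < a"
          using reals_Archimedean[OF \<open>0 < a\<close>] by blast
        then show ?thesis
          using elim(1) unfolding eventually_sequentially by (meson less_trans)
      qed
    qed
  qed
qed

lemma (in prob_space) convergence_of_rates:
  fixes u :: "nat \<Rightarrow> 'a \<Rightarrow> real"
  assumes "\<And>n. u n \<in> borel_measurable M" and "\<And>n \<omega>. \<omega> \<in> space M \<Longrightarrow> 0 \<le> u n \<omega>"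
    and mean: "\<forall>\<epsilon>>0. \<forall>n\<ge>r \<epsilon>. (\<integral>\<^sup>+\<omega>. ennreal (u n \<omega>) \<partial>M) < ennreal \<epsilon>"
    and tail: "\<forall>lam>0. \<forall>\<epsilon>>0. prob {\<omega>\<in>space M. \<exists>n\<ge>s lam \<epsilon>. \<epsilon> \<le> u n \<omega>} < lam"
  shows "((\<lambda>n. \<integral>\<^sup>+\<omega>. ennreal (u n \<omega>) \<partial>M) \<longlonglongrightarrow> 0) \<and> (AE \<omega> in M. (\<lambda>n. u n \<omega>) \<longlonglongrightarrow> 0)"
proof
  show "(\<lambda>n. \<integral>\<^sup>+\<omega>. ennreal (u n \<omega>) \<partial>M) \<longlonglongrightarrow> 0"
    using mean by (intro tendsto_zero_ennreal) (auto simp: eventually_sequentially)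
  show "AE \<omega> in M. (\<lambda>n. u n \<omega>) \<longlonglongrightarrow> 0"
    using assms(1,2) tail by (intro AE_tendsto_0_of_tail_prob) blast+
qed

section \<open>Distance to a set with respect to a Caratheodory distance\<close>

lemma distphi_nonneg:
  assumes "caratheodory_distance \<phi>" and "S \<noteq> {}"
  shows "0 \<le> distphi \<phi> S y"
  using assms unfolding distphi_def caratheodory_distance_def by (intro cINF_greatest) auto

lemma distphi_le:
  assumes "caratheodory_distance \<phi>" and "s \<in> S"
  shows "distphi \<phi> S y \<le> \<phi> s y"
  using assms unfolding distphi_def caratheodory_distance_def by (intro cINF_lower bdd_belowI2) auto

lemma distphi_eq_INF_dense:
  assumes \<phi>: "caratheodory_distance \<phi>" and "S \<noteq> {}" and "C \<subseteq> S" and "S \<subseteq> closure C"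
  shows "distphi \<phi> S y = (INF c\<in>C. \<phi> c y)"
proof (rule antisym)
  have "C \<noteq> {}"
    using assms by auto
  have bdd: "bdd_below ((\<lambda>s. \<phi> s y) ` C)"
    using \<phi> unfolding caratheodory_distance_def by (meson bdd_belowI2)
  show "distphi \<phi> S y \<le> (INF c\<in>C. \<phi> c y)"
    using \<open>C \<subseteq> S\<close> by (intro cINF_greatest[OF \<open>C \<noteq> {}\<close>] distphi_le[OF \<phi>]) auto
  show "(INF c\<in>C. \<phi> c y) \<le> distphi \<phi> S y"
    unfolding distphi_def
  proof (rule cINF_greatest[OF \<open>S \<noteq> {}\<close>])
    fix s assume "s \<in> S"
    then have "s \<in> closure C"
      using \<open>S \<subseteq> closure C\<close> by blast
    then obtain c where c: "\<And>k. c k \<in> C" "c \<longlonglongrightarrow> s"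
      by (auto simp: closure_sequential)
    have "isCont (\<lambda>a. \<phi> a y) s"
      using \<phi> by (simp add: caratheodory_distance_def continuous_on_eq_continuous_at)
    then have "(\<lambda>k. \<phi> (c k) y) \<longlonglongrightarrow> \<phi> s y"
      using c(2) by (rule isCont_tendsto_compose)
    moreover have "(INF c\<in>C. \<phi> c y) \<le> \<phi> (c k) y" for k
      using c(1) bdd by (intro cINF_lower)
    ultimately show "(INF c\<in>C. \<phi> c y) \<le> \<phi> s y"
      using LIMSEQ_le_const by blast
  qed
qed

lemma borel_measurable_distphi:
  fixes \<phi> :: "'a::{metric_space, second_countable_topology} \<Rightarrow> 'a \<Rightarrow> real"
  assumes \<phi>: "caratheodory_distance \<phi>" and "S \<noteq> {}" and f: "f \<in> borel_measurable N"
  shows "(\<lambda>\<omega>. distphi \<phi> S (f \<omega>)) \<in> borel_measurable N"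
proof -
  obtain C where C: "countable C" "C \<subseteq> S" "S \<subseteq> closure C"
    by (rule separable)
  have "(\<lambda>y. \<phi> c y) \<in> borel_measurable borel" for c
    using \<phi> by (simp add: caratheodory_distance_def)
  then show ?thesis
    unfolding distphi_eq_INF_dense[OF \<phi> \<open>S \<noteq> {}\<close> C(2,3)]
    by (intro borel_measurable_cINF_real C(1) measurable_compose[OF f])
qed

lemma theta_infdist_le_distphi:
  fixes \<theta> :: "real \<Rightarrow> real" and \<phi> :: "'a::metric_space \<Rightarrow> 'a \<Rightarrow> real"
  assumes \<phi>: "caratheodory_distance \<phi>" and "Z \<noteq> {}" and "\<theta> 0 = 0"
    and consistent: "\<forall>\<epsilon>>0. \<forall>a b. \<phi> a b < \<theta> \<epsilon> \<longrightarrow> dist a b < \<epsilon>"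
  shows "\<theta> (infdist y Z) \<le> distphi \<phi> Z y"
proof (cases "infdist y Z = 0")
  case True
  then show ?thesis
    using distphi_nonneg[OF \<phi> \<open>Z \<noteq> {}\<close>] \<open>\<theta> 0 = 0\<close> by simp
next
  case False
  then have "0 < infdist y Z"
    using infdist_nonneg[of y Z] by linarith
  show ?thesis
  proof (rule ccontr)
    assume "\<not> ?thesis"
    moreover have "bdd_below ((\<lambda>s. \<phi> s y) ` Z)"
      using \<phi> unfolding caratheodory_distance_def by (meson bdd_belowI2)
    ultimately obtain s where "s \<in> Z" "\<phi> s y < \<theta> (infdist y Z)"
      unfolding distphi_def using cINF_less_iff[OF \<open>Z \<noteq> {}\<close>] by (meson not_le)
    then have "dist s y < infdist y Z"
      using consistent \<open>0 < infdist y Z\<close> by blast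
    moreover have "infdist y Z \<le> dist y s"
      using \<open>s \<in> Z\<close> by (rule infdist_le)
    ultimately show False
      by (simp add: dist_commute)
  qed
qed

section \<open>Almost-supermartingales and a maximal inequality\<close>

locale filtered_measure =
  fixes M :: "'o measure" and Fs :: "nat \<Rightarrow> 'o measure"
  assumes filtration: "is_filtration M Fs"
begin

lemma subalgebra_Fs: "subalgebra M (Fs n)"
  using filtration by (simp add: is_filtration_def)

lemma space_Fs [simp]: "space (Fs n) = space M"
  using subalgebra_Fs by (simp add: subalgebra_def)

lemma sets_Fs_subset: "sets (Fs n) \<subseteq> sets M"
  using subalgebra_Fs by (simp add: subalgebra_def)

lemma sets_Fs_mono: "n \<le> m \<Longrightarrow> sets (Fs n) \<subseteq> sets (Fs m)"
proof (induction m rule: dec_induct)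
  case (step k)
  then show ?case
    using filtration by (auto simp: is_filtration_def)
qed simp

lemma measurable_Fs_mono: "n \<le> m \<Longrightarrow> f \<in> measurable (Fs n) N \<Longrightarrow> f \<in> measurable (Fs m) N"
  using sets_Fs_mono by (intro measurable_from_subalg[of "Fs m" "Fs n"]) (auto simp: subalgebra_def)

lemma measurable_Fs_M: "f \<in> measurable (Fs n) N \<Longrightarrow> f \<in> measurable M N"
  by (rule measurable_from_subalg[OF subalgebra_Fs])

text \<open>Only the integrated form of the Robbins--Siegmund inequality
  \<open>E[Y (n + 1) | Fs n] \<le> Y n + error\<close> is needed, over events of \<open>Fs n\<close> and with deterministic
  errors \<open>e n\<close>.\<close>

definition almost_supermartingale :: "(nat \<Rightarrow> 'o \<Rightarrow> ennreal) \<Rightarrow> (nat \<Rightarrow> ennreal) \<Rightarrow> bool" where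
  "almost_supermartingale Y e \<longleftrightarrow> (\<forall>n. Y n \<in> borel_measurable (Fs n)) \<and>
     (\<forall>n. \<forall>B\<in>sets (Fs n).
        (\<integral>\<^sup>+\<omega>. Y (Suc n) \<omega> * indicator B \<omega> \<partial>M) \<le> (\<integral>\<^sup>+\<omega>. Y n \<omega> * indicator B \<omega> \<partial>M) + e n)"

lemma almost_supermartingale_nn_integral_le:
  assumes "almost_supermartingale Y e"
  shows "(\<integral>\<^sup>+\<omega>. Y (m + j) \<omega> \<partial>M) \<le> (\<integral>\<^sup>+\<omega>. Y m \<omega> \<partial>M) + (\<Sum>i<j. e (m + i))"
proof (induction j)
  case (Suc j)
  have "space M \<in> sets (Fs (m + j))"
    using sets.top[of "Fs (m + j)"] by simp
  moreover have "(\<integral>\<^sup>+\<omega>. Y k \<omega> * indicator (space M) \<omega> \<partial>M) = (\<integral>\<^sup>+\<omega>. Y k \<omega> \<partial>M)" for k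
    by (rule nn_integral_cong) simp
  ultimately have "(\<integral>\<^sup>+\<omega>. Y (m + Suc j) \<omega> \<partial>M) \<le> (\<integral>\<^sup>+\<omega>. Y (m + j) \<omega> \<partial>M) + e (m + j)"
    using assms unfolding almost_supermartingale_def by (metis add_Suc_right)
  also have "\<dots> \<le> (\<integral>\<^sup>+\<omega>. Y m \<omega> \<partial>M) + (\<Sum>i<Suc j. e (m + i))"
    using Suc.IH by (simp add: add.assoc add_right_mono)
  finally show ?case .
qed simp

lemma almost_supermartingale_measurable:
  "almost_supermartingale Y e \<Longrightarrow> Y n \<in> borel_measurable M"
  unfolding almost_supermartingale_def by (blast intro: measurable_Fs_M)

lemma sets_Fs_below_up_to:
  fixes Y :: "nat \<Rightarrow> 'o \<Rightarrow> 'b::{linorder_topology, second_countable_topology}"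
  assumes "\<And>n. Y n \<in> borel_measurable (Fs n)"
  shows "{\<omega>\<in>space M. \<forall>i<Suc j. Y (m + i) \<omega> < c} \<in> sets (Fs (m + j))"
proof -
  have "{\<omega>\<in>space M. \<forall>i<Suc j. Y (m + i) \<omega> < c}
      = (\<Inter>i\<in>{..j}. {\<omega>\<in>space (Fs (m + j)). Y (m + i) \<omega> < c})"
    by auto
  also have "\<dots> \<in> sets (Fs (m + j))"
  proof (intro sets.finite_INT)
    fix i assume "i \<in> {..j}"
    then have [measurable]: "Y (m + i) \<in> borel_measurable (Fs (m + j))"
      using measurable_Fs_mono[OF _ assms] by simp
    show "{\<omega>\<in>space (Fs (m + j)). Y (m + i) \<omega> < c} \<in> sets (Fs (m + j))"
      by measurable
  qed auto
  finally show ?thesis .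
qed

text \<open>The process started at \<open>m\<close> and stopped as soon as it reaches \<open>c\<close>; the mass of the paths
  already stopped is counted at level \<open>c\<close>.\<close>

lemma almost_supermartingale_stopped_le:
  assumes Y: "almost_supermartingale Y e"
  shows "c * emeasure M {\<omega>\<in>space M. \<exists>i<j. c \<le> Y (m + i) \<omega>}
      + (\<integral>\<^sup>+\<omega>. Y (m + j) \<omega> * indicator {\<omega>\<in>space M. \<forall>i<j. Y (m + i) \<omega> < c} \<omega> \<partial>M)
    \<le> (\<integral>\<^sup>+\<omega>. Y m \<omega> \<partial>M) + (\<Sum>i<j. e (m + i))"
proof (induction j)
  case 0
  have "(\<integral>\<^sup>+\<omega>. Y m \<omega> * indicator {\<omega>\<in>space M. \<forall>i<0. Y (m + i) \<omega> < c} \<omega> \<partial>M) = (\<integral>\<^sup>+\<omega>. Y m \<omega> \<partial>M)"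
    by (rule nn_integral_cong) simp
  then show ?case
    by simp
next
  case (Suc j)
  define S where "S j = {\<omega>\<in>space M. \<forall>i<j. Y (m + i) \<omega> < c}" for j
  define E where "E j = {\<omega>\<in>space M. \<exists>i<j. c \<le> Y (m + i) \<omega>}" for j
  define A where "A = {\<omega>\<in>S j. c \<le> Y (m + j) \<omega>}"
  have [measurable]: "Y n \<in> borel_measurable M" for n
    using Y by (rule almost_supermartingale_measurable)
  have [measurable]: "S j \<in> sets M" "E j \<in> sets M" "A \<in> sets M" for j
    unfolding S_def E_def A_def by measurable
  have "E (Suc j) = E j \<union> A" "E j \<inter> A = {}"
    unfolding A_def E_def S_def by (auto simp: less_Suc_eq not_less)
  then have E_Suc: "emeasure M (E (Suc j)) = emeasure M (E j) + emeasure M A"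
    by (simp add: plus_emeasure)
  have "c * emeasure M A + (\<integral>\<^sup>+\<omega>. Y (m + j) \<omega> * indicator (S (Suc j)) \<omega> \<partial>M)
      = (\<integral>\<^sup>+\<omega>. c * indicator A \<omega> + Y (m + j) \<omega> * indicator (S (Suc j)) \<omega> \<partial>M)"
    by (simp add: nn_integral_add nn_integral_cmult_indicator)
  also have "\<dots> \<le> (\<integral>\<^sup>+\<omega>. Y (m + j) \<omega> * indicator (S j) \<omega> \<partial>M)"
    by (intro nn_integral_mono) (auto simp: A_def S_def indicator_def less_Suc_eq)
  finally have split: "c * emeasure M A + (\<integral>\<^sup>+\<omega>. Y (m + j) \<omega> * indicator (S (Suc j)) \<omega> \<partial>M)
      \<le> (\<integral>\<^sup>+\<omega>. Y (m + j) \<omega> * indicator (S j) \<omega> \<partial>M)" .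
  have "S (Suc j) \<in> sets (Fs (m + j))"
    unfolding S_def using Y by (intro sets_Fs_below_up_to) (simp add: almost_supermartingale_def)
  then have "c * emeasure M (E (Suc j)) + (\<integral>\<^sup>+\<omega>. Y (m + Suc j) \<omega> * indicator (S (Suc j)) \<omega> \<partial>M)
      \<le> c * emeasure M (E j) + (c * emeasure M A
         + (\<integral>\<^sup>+\<omega>. Y (m + j) \<omega> * indicator (S (Suc j)) \<omega> \<partial>M)) + e (m + j)"
    using Y unfolding almost_supermartingale_def E_Suc
    by (auto simp: distrib_left add.assoc intro!: add_left_mono)
  also have "\<dots> \<le> c * emeasure M (E j) + (\<integral>\<^sup>+\<omega>. Y (m + j) \<omega> * indicator (S j) \<omega> \<partial>M) + e (m + j)"
    using split by (intro add_right_mono add_left_mono)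
  also have "\<dots> \<le> (\<integral>\<^sup>+\<omega>. Y m \<omega> \<partial>M) + (\<Sum>i<Suc j. e (m + i))"
    using Suc.IH by (simp add: S_def E_def add.assoc add_right_mono)
  finally show ?case
    by (simp add: S_def E_def)
qed

lemma almost_supermartingale_maximal_ineq:
  assumes Y: "almost_supermartingale Y e"
  shows "c * emeasure M {\<omega>\<in>space M. \<exists>i. c \<le> Y (m + i) \<omega>}
    \<le> (\<integral>\<^sup>+\<omega>. Y m \<omega> \<partial>M) + (\<Sum>i. e (m + i))"
proof -
  define E where "E j = {\<omega>\<in>space M. \<exists>i<j. c \<le> Y (m + i) \<omega>}" for j
  have [measurable]: "Y n \<in> borel_measurable M" for n
    using Y by (rule almost_supermartingale_measurable)
  have "E j \<in> sets M" for j
    unfolding E_def by measurable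
  moreover have "incseq E"
    unfolding incseq_def E_def by force
  ultimately have "emeasure M (\<Union>j. E j) = (SUP j. emeasure M (E j))"
    by (simp add: SUP_emeasure_incseq image_subset_iff)
  moreover have "{\<omega>\<in>space M. \<exists>i. c \<le> Y (m + i) \<omega>} = (\<Union>j. E j)"
    unfolding E_def by auto
  ultimately have "c * emeasure M {\<omega>\<in>space M. \<exists>i. c \<le> Y (m + i) \<omega>} = (SUP j. c * emeasure M (E j))"
    by (simp add: SUP_mult_left_ennreal)
  also have "\<dots> \<le> (\<integral>\<^sup>+\<omega>. Y m \<omega> \<partial>M) + (\<Sum>i. e (m + i))"
  proof (rule SUP_least)
    fix j
    have "c * emeasure M (E j) \<le> (\<integral>\<^sup>+\<omega>. Y m \<omega> \<partial>M) + (\<Sum>i<j. e (m + i))"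
      using almost_supermartingale_stopped_le[OF Y, where c = c and m = m and j = j] unfolding E_def
      by (rule order_trans[rotated]) simp
    also have "\<dots> \<le> (\<integral>\<^sup>+\<omega>. Y m \<omega> \<partial>M) + (\<Sum>i. e (m + i))"
      by (intro add_left_mono sum_le_suminf) auto
    finally show "c * emeasure M (E j) \<le> (\<integral>\<^sup>+\<omega>. Y m \<omega> \<partial>M) + (\<Sum>i. e (m + i))" .
  qed
  finally show ?thesis .
qed

end

section \<open>Stochastic quasi-Fejer monotone sequences\<close>

locale quasi_fejer = filtered_measure M Fs + prob_space M
  for M :: "'o measure" and Fs :: "nat \<Rightarrow> 'o measure" +
  fixes \<phi> :: "'a::{metric_space, second_countable_topology} \<Rightarrow> 'a \<Rightarrow> real"
    and Z :: "'a set" and x :: "nat \<Rightarrow> 'o \<Rightarrow> 'a" and \<zeta> \<xi> :: "nat \<Rightarrow> 'o \<Rightarrow> real"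
  assumes phi: "caratheodory_distance \<phi>"
    and Z_ne: "Z \<noteq> {}"
    and adapted: "\<And>n. x n \<in> measurable (Fs n) borel"
    and zeta: "l1plus M Fs \<zeta>" and xi: "l1plus M Fs \<xi>"
    and fejer: "\<And>n z. z \<in> Z \<Longrightarrow> AE \<omega> in M.
        nn_cond_exp M (Fs n) (\<lambda>\<omega>. ennreal (\<phi> z (x (Suc n) \<omega>))) \<omega>
          \<le> ennreal ((1 + \<zeta> n \<omega>) * \<phi> z (x n \<omega>) + \<xi> n \<omega>)"
begin

definition dist_Z :: "nat \<Rightarrow> 'o \<Rightarrow> real" where
  "dist_Z n \<omega> = distphi \<phi> Z (x n \<omega>)"

definition partial_prod :: "nat \<Rightarrow> 'o \<Rightarrow> real" where
  "partial_prod n \<omega> = (\<Prod>k<n. 1 + \<zeta> k \<omega>)"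

definition scaled_dist :: "nat \<Rightarrow> 'o \<Rightarrow> ennreal" where
  "scaled_dist n \<omega> = ennreal (dist_Z n \<omega> / partial_prod n \<omega>)"

definition error_tail :: "nat \<Rightarrow> ennreal" where
  "error_tail m = (\<Sum>i. \<integral>\<^sup>+\<omega>. ennreal (\<xi> (m + i) \<omega>) \<partial>M)"

lemma zeta_Fs: "\<zeta> n \<in> borel_measurable (Fs n)"
  and zeta_nonneg: "\<omega> \<in> space M \<Longrightarrow> 0 \<le> \<zeta> n \<omega>"
  and xi_Fs: "\<xi> n \<in> borel_measurable (Fs n)"
  and xi_nonneg: "\<omega> \<in> space M \<Longrightarrow> 0 \<le> \<xi> n \<omega>"
  using zeta xi by (auto simp: l1plus_def)

lemma x_M [measurable]: "x n \<in> borel_measurable M"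
  and xi_M [measurable]: "\<xi> n \<in> borel_measurable M"
  by (rule measurable_Fs_M[OF adapted], rule measurable_Fs_M[OF xi_Fs])

lemma dist_Z_nonneg: "0 \<le> dist_Z n \<omega>"
  unfolding dist_Z_def by (rule distphi_nonneg[OF phi Z_ne])

lemma dist_Z_Fs: "dist_Z n \<in> borel_measurable (Fs n)"
  unfolding dist_Z_def[abs_def] by (rule borel_measurable_distphi[OF phi Z_ne adapted])

lemma dist_Z_M [measurable]: "dist_Z n \<in> borel_measurable M"
  by (rule measurable_Fs_M[OF dist_Z_Fs])

lemma infdist_Z_M [measurable]: "(\<lambda>\<omega>. infdist (x n \<omega>) Z) \<in> borel_measurable M"
  by (rule measurable_compose[OF x_M borel_measurable_continuous_onI])
    (rule continuous_on_infdist[OF continuous_on_id])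

lemma partial_prod_Fs: "n \<le> Suc m \<Longrightarrow> partial_prod n \<in> borel_measurable (Fs m)"
  unfolding partial_prod_def[abs_def]
  by (intro borel_measurable_prod borel_measurable_add borel_measurable_const
      measurable_Fs_mono[OF _ zeta_Fs]) auto

lemma partial_prod_ge_1: "\<omega> \<in> space M \<Longrightarrow> 1 \<le> partial_prod n \<omega>"
  unfolding partial_prod_def using zeta_nonneg by (intro prod_ge_1) auto

lemma partial_prod_Suc: "partial_prod (Suc n) \<omega> = partial_prod n \<omega> * (1 + \<zeta> n \<omega>)"
  unfolding partial_prod_def by simp

lemma scaled_dist_Fs: "scaled_dist n \<in> borel_measurable (Fs n)"
proof -
  have [measurable]: "dist_Z n \<in> borel_measurable (Fs n)" "partial_prod n \<in> borel_measurable (Fs n)"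
    by (auto intro: dist_Z_Fs partial_prod_Fs)
  show ?thesis
    unfolding scaled_dist_def[abs_def] by measurable
qed

lemma scaled_dist_M [measurable]: "scaled_dist n \<in> borel_measurable M"
  by (rule measurable_Fs_M[OF scaled_dist_Fs])

lemma scaled_dist_le:
  assumes "\<omega> \<in> space M"
  shows "scaled_dist n \<omega> \<le> ennreal (dist_Z n \<omega>)"
proof -
  have "dist_Z n \<omega> / partial_prod n \<omega> \<le> dist_Z n \<omega> / 1"
    using partial_prod_ge_1[OF assms, of n] dist_Z_nonneg[of n \<omega>] by (intro divide_left_mono) auto
  then show ?thesis
    by (simp add: scaled_dist_def ennreal_leI)
qed

lemma dist_Z_le_scaled_dist:
  assumes "\<omega> \<in> space M" and "partial_prod n \<omega> \<le> K"
  shows "ennreal (dist_Z n \<omega>) \<le> ennreal K * scaled_dist n \<omega>"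
proof -
  have "1 \<le> partial_prod n \<omega>"
    using partial_prod_ge_1[OF assms(1)] .
  then have "dist_Z n \<omega> = partial_prod n \<omega> * (dist_Z n \<omega> / partial_prod n \<omega>)"
    by simp
  also have "\<dots> \<le> K * (dist_Z n \<omega> / partial_prod n \<omega>)"
    using assms(2) \<open>1 \<le> partial_prod n \<omega>\<close> dist_Z_nonneg[of n \<omega>]
    by (intro mult_right_mono) auto
  finally show ?thesis
    unfolding scaled_dist_def using assms(2) \<open>1 \<le> partial_prod n \<omega>\<close>
    by (simp add: ennreal_leI ennreal_mult'[symmetric])
qed

lemma scaled_dist_ge_of_dist_Z_ge:
  assumes "\<omega> \<in> space M" and "partial_prod n \<omega> \<le> K" and "0 \<le> c" and "c \<le> dist_Z n \<omega>"
  shows "ennreal (c / K) \<le> scaled_dist n \<omega>"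
proof -
  have "0 < partial_prod n \<omega>"
    using partial_prod_ge_1[OF assms(1), of n] by simp
  then have "c / K \<le> c / partial_prod n \<omega>"
    using assms(2,3) by (intro divide_left_mono) auto
  also have "\<dots> \<le> dist_Z n \<omega> / partial_prod n \<omega>"
    using assms(4) \<open>0 < partial_prod n \<omega>\<close> by (intro divide_right_mono) auto
  finally show ?thesis
    unfolding scaled_dist_def by (rule ennreal_leI)
qed

lemma AE_partial_prod_le:
  assumes "AE \<omega> in M. (\<Prod>n. 1 + \<zeta> n \<omega>) < K"
  shows "AE \<omega> in M. \<forall>n. partial_prod n \<omega> \<le> K"
proof -
  have "AE \<omega> in M. summable (\<lambda>n. \<zeta> n \<omega>)"
    using zeta by (simp add: l1plus_def)
  then show ?thesis
    using assms AE_space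
  proof eventually_elim
    case (elim \<omega>)
    note nonneg = zeta_nonneg[OF elim(3)]
    have "convergent_prod (\<lambda>k. 1 + \<zeta> k \<omega>)"
      using elim(1) nonneg by (intro summable_imp_convergent_prod_real) (simp, smt (verit))
    then have "partial_prod n \<omega> \<le> (\<Prod>k. 1 + \<zeta> k \<omega>)" for n
      unfolding partial_prod_def using nonneg
      by (intro prod_le_prodinf convergent_prod_has_prod) auto
    with elim(2) show ?case
      by (meson less_imp_le order_trans)
  qed
qed

lemma sigma_finite_subalgebra_Fs: "sigma_finite_subalgebra M (Fs n)"
proof -
  have "finite_measure_subalgebra M (Fs n)"
    by unfold_locales (rule subalgebra_Fs)
  then show ?thesis
    by (rule finite_measure_subalgebra_is_sigma_finite)
qed

text \<open>The Fejer inequalities for the points of a countable dense subset of \<open>Z\<close> hold simultaneously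
  almost surely, and by continuity of \<open>\<phi>\<close> in its first argument their infimum is the distance
  to \<open>Z\<close>.\<close>

lemma fejer_dist_Z:
  "AE \<omega> in M. nn_cond_exp M (Fs n) (\<lambda>\<omega>. ennreal (dist_Z (Suc n) \<omega>)) \<omega>
      \<le> ennreal ((1 + \<zeta> n \<omega>) * dist_Z n \<omega> + \<xi> n \<omega>)"
proof -
  interpret sigma_finite_subalgebra M "Fs n"
    by (rule sigma_finite_subalgebra_Fs)
  obtain C where C: "countable C" "C \<subseteq> Z" "Z \<subseteq> closure C"
    by (rule separable)
  have [measurable]: "(\<lambda>y. \<phi> c y) \<in> borel_measurable borel" for c
    using phi by (simp add: caratheodory_distance_def)
  have "AE \<omega> in M. nn_cond_exp M (Fs n) (\<lambda>\<omega>. ennreal (dist_Z (Suc n) \<omega>)) \<omega>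
      \<le> ennreal ((1 + \<zeta> n \<omega>) * \<phi> c (x n \<omega>) + \<xi> n \<omega>)" if "c \<in> C" for c
  proof -
    have "c \<in> Z"
      using that C(2) by auto
    have "AE \<omega> in M. nn_cond_exp M (Fs n) (\<lambda>\<omega>. ennreal (dist_Z (Suc n) \<omega>)) \<omega>
        \<le> nn_cond_exp M (Fs n) (\<lambda>\<omega>. ennreal (\<phi> c (x (Suc n) \<omega>))) \<omega>"
    proof (rule nn_cond_exp_mono)
      show "AE \<omega> in M. ennreal (dist_Z (Suc n) \<omega>) \<le> ennreal (\<phi> c (x (Suc n) \<omega>))"
        using \<open>c \<in> Z\<close> by (auto simp: dist_Z_def intro!: ennreal_leI distphi_le[OF phi])
    qed measurable
    then show ?thesis
      using fejer[OF \<open>c \<in> Z\<close>, of n] by eventually_elim (rule order_trans)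
  qed
  then have "AE \<omega> in M. \<forall>c\<in>C. nn_cond_exp M (Fs n) (\<lambda>\<omega>. ennreal (dist_Z (Suc n) \<omega>)) \<omega>
      \<le> ennreal ((1 + \<zeta> n \<omega>) * \<phi> c (x n \<omega>) + \<xi> n \<omega>)"
    using C(1) by (subst AE_ball_countable) auto
  then show ?thesis
    using AE_space
  proof eventually_elim
    case (elim \<omega>)
    have "C \<noteq> {}"
      using C Z_ne by auto
    with elim show ?case
      unfolding dist_Z_def distphi_eq_INF_dense[OF phi Z_ne C(2,3)]
      using phi zeta_nonneg xi_nonneg
      by (intro ennreal_le_affine_INF) (auto simp: caratheodory_distance_def add_pos_nonneg)
  qed
qed

lemma scaled_fejer_pointwise:
  assumes "\<omega> \<in> space M"
  shows "ennreal (indicator B \<omega> / partial_prod (Suc n) \<omega>) * ennreal ((1 + \<zeta> n \<omega>) * dist_Z n \<omega> + \<xi> n \<omega>)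
    \<le> scaled_dist n \<omega> * indicator B \<omega> + ennreal (\<xi> n \<omega>)"
proof (cases "\<omega> \<in> B")
  case True
  note nonneg = partial_prod_ge_1[OF assms] zeta_nonneg[OF assms] xi_nonneg[OF assms] dist_Z_nonneg
  have "0 < partial_prod n \<omega> * (1 + \<zeta> n \<omega>)"
    using nonneg(1,2)[of n] by (intro mult_pos_pos) linarith+
  then have "ennreal (indicator B \<omega> / partial_prod (Suc n) \<omega>) * ennreal ((1 + \<zeta> n \<omega>) * dist_Z n \<omega> + \<xi> n \<omega>)
      = ennreal (((1 + \<zeta> n \<omega>) * dist_Z n \<omega> + \<xi> n \<omega>) / (partial_prod n \<omega> * (1 + \<zeta> n \<omega>)))"
    using True by (simp add: partial_prod_Suc ennreal_mult'[symmetric] del: ennreal_plus)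
  also have "\<dots> \<le> ennreal (dist_Z n \<omega> / partial_prod n \<omega> + \<xi> n \<omega>)"
    using nonneg by (intro ennreal_leI divide_prod_affine_le)
  also have "\<dots> = scaled_dist n \<omega> * indicator B \<omega> + ennreal (\<xi> n \<omega>)"
    using True nonneg(1,3)[of n] dist_Z_nonneg[of n \<omega>]
    by (simp add: scaled_dist_def ennreal_plus divide_nonneg_nonneg)
  finally show ?thesis .
qed simp

lemma nn_integral_scaled_dist_Suc_le:
  assumes B: "B \<in> sets (Fs n)"
  shows "(\<integral>\<^sup>+\<omega>. scaled_dist (Suc n) \<omega> * indicator B \<omega> \<partial>M)
    \<le> (\<integral>\<^sup>+\<omega>. scaled_dist n \<omega> * indicator B \<omega> \<partial>M) + (\<integral>\<^sup>+\<omega>. ennreal (\<xi> n \<omega>) \<partial>M)"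
proof -
  interpret sigma_finite_subalgebra M "Fs n"
    by (rule sigma_finite_subalgebra_Fs)
  define g where "g \<omega> = ennreal (indicator B \<omega> / partial_prod (Suc n) \<omega>)" for \<omega>
  have [measurable]: "g \<in> borel_measurable (Fs n)"
    unfolding g_def using B partial_prod_Fs[of "Suc n" n] by measurable
  have [measurable]: "B \<in> sets M"
    using B sets_Fs_subset by auto
  have "scaled_dist (Suc n) \<omega> * indicator B \<omega> = g \<omega> * ennreal (dist_Z (Suc n) \<omega>)"
    if "\<omega> \<in> space M" for \<omega>
  proof -
    have "0 \<le> 1 / partial_prod (Suc n) \<omega>"
      using partial_prod_ge_1[OF that, of "Suc n"] by (intro divide_nonneg_nonneg) auto
    then show ?thesis
      by (simp add: g_def scaled_dist_def indicator_def ennreal_mult'[symmetric])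
  qed
  then have "(\<integral>\<^sup>+\<omega>. scaled_dist (Suc n) \<omega> * indicator B \<omega> \<partial>M)
      = (\<integral>\<^sup>+\<omega>. g \<omega> * ennreal (dist_Z (Suc n) \<omega>) \<partial>M)"
    by (rule nn_integral_cong)
  also have "\<dots> = (\<integral>\<^sup>+\<omega>. g \<omega> * nn_cond_exp M (Fs n) (\<lambda>\<omega>. ennreal (dist_Z (Suc n) \<omega>)) \<omega> \<partial>M)"
    by (rule nn_cond_exp_intg[symmetric]) measurable
  also have "\<dots> \<le> (\<integral>\<^sup>+\<omega>. g \<omega> * ennreal ((1 + \<zeta> n \<omega>) * dist_Z n \<omega> + \<xi> n \<omega>) \<partial>M)"
    using fejer_dist_Z[of n] by (intro nn_integral_mono_AE) (auto elim!: eventually_mono intro: mult_left_mono)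
  also have "\<dots> \<le> (\<integral>\<^sup>+\<omega>. scaled_dist n \<omega> * indicator B \<omega> + ennreal (\<xi> n \<omega>) \<partial>M)"
    unfolding g_def by (intro nn_integral_mono scaled_fejer_pointwise)
  also have "\<dots> = (\<integral>\<^sup>+\<omega>. scaled_dist n \<omega> * indicator B \<omega> \<partial>M) + (\<integral>\<^sup>+\<omega>. ennreal (\<xi> n \<omega>) \<partial>M)"
    by (rule nn_integral_add) measurable
  finally show ?thesis .
qed

lemma almost_supermartingale_scaled_dist:
  "almost_supermartingale scaled_dist (\<lambda>n. \<integral>\<^sup>+\<omega>. ennreal (\<xi> n \<omega>) \<partial>M)"
  unfolding almost_supermartingale_def using scaled_dist_Fs nn_integral_scaled_dist_Suc_le by blast

lemma nn_integral_dist_Z_le: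
  assumes K: "AE \<omega> in M. \<forall>n. partial_prod n \<omega> \<le> K" and "m \<le> n"
  shows "(\<integral>\<^sup>+\<omega>. ennreal (dist_Z n \<omega>) \<partial>M)
    \<le> ennreal K * ((\<integral>\<^sup>+\<omega>. ennreal (dist_Z m \<omega>) \<partial>M) + error_tail m)"
proof -
  have "AE \<omega> in M. ennreal (dist_Z n \<omega>) \<le> ennreal K * scaled_dist n \<omega>"
    using K AE_space by eventually_elim (simp add: dist_Z_le_scaled_dist)
  then have "(\<integral>\<^sup>+\<omega>. ennreal (dist_Z n \<omega>) \<partial>M) \<le> (\<integral>\<^sup>+\<omega>. ennreal K * scaled_dist n \<omega> \<partial>M)"
    by (rule nn_integral_mono_AE)
  also have "\<dots> = ennreal K * (\<integral>\<^sup>+\<omega>. scaled_dist n \<omega> \<partial>M)"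
    by (rule nn_integral_cmult) measurable
  also have "\<dots> \<le> ennreal K * ((\<integral>\<^sup>+\<omega>. scaled_dist m \<omega> \<partial>M) + error_tail m)"
  proof (rule mult_left_mono)
    have "(\<integral>\<^sup>+\<omega>. scaled_dist (m + (n - m)) \<omega> \<partial>M)
        \<le> (\<integral>\<^sup>+\<omega>. scaled_dist m \<omega> \<partial>M) + (\<Sum>i<n - m. \<integral>\<^sup>+\<omega>. ennreal (\<xi> (m + i) \<omega>) \<partial>M)"
      by (rule almost_supermartingale_nn_integral_le[OF almost_supermartingale_scaled_dist])
    also have "\<dots> \<le> (\<integral>\<^sup>+\<omega>. scaled_dist m \<omega> \<partial>M) + error_tail m"
      unfolding error_tail_def by (intro add_left_mono sum_le_suminf) auto
    finally show "(\<integral>\<^sup>+\<omega>. scaled_dist n \<omega> \<partial>M) \<le> (\<integral>\<^sup>+\<omega>. scaled_dist m \<omega> \<partial>M) + error_tail m"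
      using \<open>m \<le> n\<close> by simp
  qed simp
  also have "\<dots> \<le> ennreal K * ((\<integral>\<^sup>+\<omega>. ennreal (dist_Z m \<omega>) \<partial>M) + error_tail m)"
    by (intro mult_left_mono add_right_mono nn_integral_mono scaled_dist_le) auto
  finally show ?thesis .
qed

lemma emeasure_dist_Z_tail_le:
  assumes K: "AE \<omega> in M. \<forall>n. partial_prod n \<omega> \<le> K" and "0 < K" and "0 < c"
  shows "ennreal c * emeasure M {\<omega>\<in>space M. \<exists>n\<ge>m. c \<le> dist_Z n \<omega>}
    \<le> ennreal K * ((\<integral>\<^sup>+\<omega>. ennreal (dist_Z m \<omega>) \<partial>M) + error_tail m)"
proof -
  let ?T = "{\<omega>\<in>space M. \<exists>n\<ge>m. c \<le> dist_Z n \<omega>}"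
  let ?S = "{\<omega>\<in>space M. \<exists>i. ennreal (c / K) \<le> scaled_dist (m + i) \<omega>}"
  have "AE \<omega> in M. \<omega> \<in> ?T \<longrightarrow> \<omega> \<in> ?S"
    using K
  proof eventually_elim
    case (elim \<omega>)
    show ?case
    proof
      assume "\<omega> \<in> ?T"
      then obtain n where "\<omega> \<in> space M" "m \<le> n" "c \<le> dist_Z n \<omega>"
        by auto
      then show "\<omega> \<in> ?S"
        using elim \<open>0 < c\<close> scaled_dist_ge_of_dist_Z_ge[of \<omega> n K c]
        by (auto intro!: exI[of _ "n - m"])
    qed
  qed
  then have "emeasure M ?T \<le> emeasure M ?S"
    by (rule emeasure_mono_AE) measurable
  then have "ennreal c * emeasure M ?T \<le> ennreal c * emeasure M ?S"
    by (rule mult_left_mono) simp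
  also have "\<dots> = ennreal K * (ennreal (c / K) * emeasure M ?S)"
    using \<open>0 < K\<close> \<open>0 < c\<close> by (simp add: ennreal_mult'[symmetric] mult.assoc[symmetric])
  also have "\<dots> \<le> ennreal K * ((\<integral>\<^sup>+\<omega>. scaled_dist m \<omega> \<partial>M) + error_tail m)"
    using almost_supermartingale_maximal_ineq[OF almost_supermartingale_scaled_dist]
    unfolding error_tail_def by (intro mult_left_mono) auto
  also have "\<dots> \<le> ennreal K * ((\<integral>\<^sup>+\<omega>. ennreal (dist_Z m \<omega>) \<partial>M) + error_tail m)"
    by (intro mult_left_mono add_right_mono nn_integral_mono scaled_dist_le) auto
  finally show ?thesis .
qed

end

section \<open>Rates from the moduli\<close>

locale quasi_fejer_moduli = quasi_fejer M Fs \<phi> Z x \<zeta> \<xi>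
  for M :: "'o measure" and Fs \<phi> Z x \<zeta> \<xi> +
  fixes F :: "'a \<Rightarrow> ennreal" and K :: real and chi :: "real \<Rightarrow> nat" and \<psi> :: "real \<Rightarrow> nat \<Rightarrow> nat"
    and \<tau> :: "real \<Rightarrow> real" and \<rho> :: "real \<Rightarrow> nat"
  assumes K_pos: "0 < K"
    and K_bound: "AE \<omega> in M. (\<Prod>n. 1 + \<zeta> n \<omega>) < K"
    and chi: "\<And>\<epsilon>. 0 < \<epsilon> \<Longrightarrow> (\<Sum>n. \<integral>\<^sup>+\<omega>. ennreal (\<xi> (n + chi \<epsilon>) \<omega>) \<partial>M) < ennreal \<epsilon>"
    and liminf: "\<And>\<epsilon> N. 0 < \<epsilon> \<Longrightarrow> \<exists>n. N \<le> n \<and> n \<le> \<psi> \<epsilon> N \<and> (\<integral>\<^sup>+\<omega>. F (x n \<omega>) \<partial>M) < ennreal \<epsilon>"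
    and tau_pos: "\<And>\<epsilon>. 0 < \<epsilon> \<Longrightarrow> 0 < \<tau> \<epsilon>"
    and tau: "\<And>\<epsilon> n. 0 < \<epsilon> \<Longrightarrow> (\<integral>\<^sup>+\<omega>. F (x n \<omega>) \<partial>M) < ennreal (\<tau> \<epsilon>) \<Longrightarrow>
        (\<integral>\<^sup>+\<omega>. ennreal (distphi \<phi> Z (x n \<omega>)) \<partial>M) < ennreal \<epsilon>"
    and rho: "\<And>\<epsilon>. \<rho> \<epsilon> = \<psi> (\<tau> (\<epsilon> / (3 * K))) (chi (\<epsilon> / (3 * K)))"
begin

lemma index_with_small_mean_and_error:
  assumes "0 < \<epsilon>"
  obtains m where "m \<le> \<rho> \<epsilon>" and "(\<integral>\<^sup>+\<omega>. ennreal (dist_Z m \<omega>) \<partial>M) < ennreal (\<epsilon> / (3 * K))"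
    and "error_tail m < ennreal (\<epsilon> / (3 * K))"
proof -
  define e where "e = \<epsilon> / (3 * K)"
  have "0 < e"
    using assms K_pos by (simp add: e_def)
  obtain m where m: "chi e \<le> m" "m \<le> \<psi> (\<tau> e) (chi e)" "(\<integral>\<^sup>+\<omega>. F (x m \<omega>) \<partial>M) < ennreal (\<tau> e)"
    using liminf[OF tau_pos[OF \<open>0 < e\<close>]] by blast
  have "error_tail m \<le> (\<Sum>i. \<integral>\<^sup>+\<omega>. ennreal (\<xi> (i + chi e) \<omega>) \<partial>M)"
    unfolding error_tail_def
    using suminf_shift_mono_ennreal[OF m(1), of "\<lambda>k. \<integral>\<^sup>+\<omega>. ennreal (\<xi> k \<omega>) \<partial>M"]
    by (simp add: add.commute)
  also have "\<dots> < ennreal e"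
    using chi[OF \<open>0 < e\<close>] .
  finally show thesis
    using that[of m] m(2) tau[OF \<open>0 < e\<close> m(3)] by (simp add: rho e_def dist_Z_def)
qed

lemma dist_Z_mean_rate:
  assumes "0 < \<epsilon>" and "\<rho> \<epsilon> \<le> n"
  shows "(\<integral>\<^sup>+\<omega>. ennreal (dist_Z n \<omega>) \<partial>M) < ennreal \<epsilon>"
proof -
  obtain m where m: "m \<le> \<rho> \<epsilon>" "(\<integral>\<^sup>+\<omega>. ennreal (dist_Z m \<omega>) \<partial>M) < ennreal (\<epsilon> / (3 * K))"
    "error_tail m < ennreal (\<epsilon> / (3 * K))"
    using index_with_small_mean_and_error[OF assms(1)] by blast
  have "(\<integral>\<^sup>+\<omega>. ennreal (dist_Z n \<omega>) \<partial>M)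
      \<le> ennreal K * ((\<integral>\<^sup>+\<omega>. ennreal (dist_Z m \<omega>) \<partial>M) + error_tail m)"
    using m(1) assms(2) by (intro nn_integral_dist_Z_le[OF AE_partial_prod_le[OF K_bound]]) simp
  also have "\<dots> < ennreal K * ennreal (\<epsilon> / (3 * K) + \<epsilon> / (3 * K))"
    using m(2,3) K_pos by (intro ennreal_mult_strict_left_mono add_mono_ennreal) auto
  also have "\<dots> \<le> ennreal \<epsilon>"
    using K_pos assms(1) by (simp add: ennreal_mult'[symmetric] field_simps)
  finally show ?thesis .
qed

lemma dist_Z_tail_prob_rate:
  assumes "0 < lam" and "0 < \<epsilon>"
  shows "prob {\<omega>\<in>space M. \<exists>n\<ge>\<rho> (lam * \<epsilon>). \<epsilon> \<le> dist_Z n \<omega>} < lam"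
proof -
  obtain m where m: "m \<le> \<rho> (lam * \<epsilon>)"
    "(\<integral>\<^sup>+\<omega>. ennreal (dist_Z m \<omega>) \<partial>M) < ennreal (lam * \<epsilon> / (3 * K))"
    "error_tail m < ennreal (lam * \<epsilon> / (3 * K))"
    using index_with_small_mean_and_error[of "lam * \<epsilon>"] assms by auto
  let ?T = "{\<omega>\<in>space M. \<exists>n\<ge>m. \<epsilon> \<le> dist_Z n \<omega>}"
  have "ennreal (\<epsilon> * prob ?T) = ennreal \<epsilon> * emeasure M ?T"
    using assms by (simp add: emeasure_eq_measure ennreal_mult)
  also have "\<dots> \<le> ennreal K * ((\<integral>\<^sup>+\<omega>. ennreal (dist_Z m \<omega>) \<partial>M) + error_tail m)"
    using assms(2) K_pos by (intro emeasure_dist_Z_tail_le[OF AE_partial_prod_le[OF K_bound]])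
  also have "\<dots> < ennreal K * ennreal (lam * \<epsilon> / (3 * K) + lam * \<epsilon> / (3 * K))"
    using m(2,3) K_pos by (intro ennreal_mult_strict_left_mono add_mono_ennreal) auto
  also have "\<dots> \<le> ennreal (\<epsilon> * lam)"
    using K_pos assms by (simp add: ennreal_mult'[symmetric] field_simps)
  finally have "prob ?T < lam"
    using assms by (simp add: ennreal_less_iff)
  moreover have "prob {\<omega>\<in>space M. \<exists>n\<ge>\<rho> (lam * \<epsilon>). \<epsilon> \<le> dist_Z n \<omega>} \<le> prob ?T"
    using m(1) by (intro finite_measure_mono) (auto intro: order_trans, measurable)
  ultimately show ?thesis
    by simp
qed

lemma infdist_mean_rate:
  fixes \<theta> :: "real \<Rightarrow> real"
  assumes convex: "convex_on {0..} \<theta>" and "\<theta> 0 = 0" and pos: "\<forall>\<epsilon>>0. \<theta> \<epsilon> > 0"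
    and consistent: "\<forall>\<epsilon>>0. \<forall>a b. \<phi> a b < \<theta> \<epsilon> \<longrightarrow> dist a b < \<epsilon>"
    and "0 < \<epsilon>" and "\<rho> (\<theta> \<epsilon>) \<le> n"
  shows "(\<integral>\<^sup>+ \<omega>. ennreal (infdist (x n \<omega>) Z) \<partial>M) < ennreal \<epsilon>"
proof -
  have "0 < \<theta> \<epsilon>"
    using pos \<open>0 < \<epsilon>\<close> by blast
  then have small: "(\<integral>\<^sup>+ \<omega>. ennreal (dist_Z n \<omega>) \<partial>M) < ennreal (\<theta> \<epsilon>)"
    using \<open>\<rho> (\<theta> \<epsilon>) \<le> n\<close> by (rule dist_Z_mean_rate)
  have minorant: "\<theta> (infdist (x n \<omega>) Z) \<le> dist_Z n \<omega>" for \<omega>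
    unfolding dist_Z_def using phi Z_ne \<open>\<theta> 0 = 0\<close> consistent by (rule theta_infdist_le_distphi)
  show ?thesis
    by (rule nn_integral_less_of_convex_minorant[where v = "dist_Z n",
          OF convex \<open>\<theta> 0 = 0\<close> \<open>0 < \<epsilon>\<close> \<open>0 < \<theta> \<epsilon>\<close> _ _ _ _ small])
      (simp_all add: dist_Z_nonneg infdist_nonneg minorant)
qed

lemma infdist_tail_prob_rate:
  fixes \<theta> :: "real \<Rightarrow> real"
  assumes mono: "mono_on {0..} \<theta>" and "\<theta> 0 = 0" and pos: "\<forall>\<epsilon>>0. \<theta> \<epsilon> > 0"
    and consistent: "\<forall>\<epsilon>>0. \<forall>a b. \<phi> a b < \<theta> \<epsilon> \<longrightarrow> dist a b < \<epsilon>"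
    and "0 < lam" and "0 < \<epsilon>"
  shows "prob {\<omega>\<in>space M. \<exists>n\<ge>\<rho> (lam * \<theta> \<epsilon>). \<epsilon> \<le> infdist (x n \<omega>) Z} < lam"
proof -
  have "\<theta> \<epsilon> \<le> dist_Z n \<omega>" if "\<epsilon> \<le> infdist (x n \<omega>) Z" for n \<omega>
  proof -
    have "\<theta> \<epsilon> \<le> \<theta> (infdist (x n \<omega>) Z)"
      using mono_onD[OF mono] that \<open>0 < \<epsilon>\<close> by auto
    also have "\<dots> \<le> dist_Z n \<omega>"
      unfolding dist_Z_def using phi Z_ne \<open>\<theta> 0 = 0\<close> consistent by (rule theta_infdist_le_distphi)
    finally show ?thesis .
  qed
  then have "{\<omega>\<in>space M. \<exists>n\<ge>\<rho> (lam * \<theta> \<epsilon>). \<epsilon> \<le> infdist (x n \<omega>) Z}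
      \<subseteq> {\<omega>\<in>space M. \<exists>n\<ge>\<rho> (lam * \<theta> \<epsilon>). \<theta> \<epsilon> \<le> dist_Z n \<omega>}"
    by blast
  then have "prob {\<omega>\<in>space M. \<exists>n\<ge>\<rho> (lam * \<theta> \<epsilon>). \<epsilon> \<le> infdist (x n \<omega>) Z}
      \<le> prob {\<omega>\<in>space M. \<exists>n\<ge>\<rho> (lam * \<theta> \<epsilon>). \<theta> \<epsilon> \<le> dist_Z n \<omega>}"
    by (rule finite_measure_mono) measurable
  also have "\<dots> < lam"
    using \<open>0 < lam\<close> \<open>0 < \<epsilon>\<close> pos by (intro dist_Z_tail_prob_rate) auto
  finally show ?thesis .
qed

lemma distphi_convergence:
  "((\<lambda>n. \<integral>\<^sup>+ \<omega>. ennreal (distphi \<phi> Z (x n \<omega>)) \<partial>M) \<longlonglongrightarrow> 0)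
   \<and> (AE \<omega> in M. (\<lambda>n. distphi \<phi> Z (x n \<omega>)) \<longlonglongrightarrow> 0)
   \<and> (\<forall>\<epsilon>>0. \<forall>n\<ge>\<rho> \<epsilon>. (\<integral>\<^sup>+ \<omega>. ennreal (distphi \<phi> Z (x n \<omega>)) \<partial>M) < ennreal \<epsilon>)
   \<and> (\<forall>lam>0. \<forall>\<epsilon>>0. measure M {\<omega>\<in>space M. \<exists>n\<ge>\<rho> (lam * \<epsilon>). distphi \<phi> Z (x n \<omega>) \<ge> \<epsilon>} < lam)"
proof -
  have mean: "\<forall>\<epsilon>>0. \<forall>n\<ge>\<rho> \<epsilon>. (\<integral>\<^sup>+ \<omega>. ennreal (dist_Z n \<omega>) \<partial>M) < ennreal \<epsilon>"
    using dist_Z_mean_rate by blast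
  have tail: "\<forall>lam>0. \<forall>\<epsilon>>0. prob {\<omega>\<in>space M. \<exists>n\<ge>\<rho> (lam * \<epsilon>). \<epsilon> \<le> dist_Z n \<omega>} < lam"
    using dist_Z_tail_prob_rate by blast
  have "((\<lambda>n. \<integral>\<^sup>+ \<omega>. ennreal (dist_Z n \<omega>) \<partial>M) \<longlonglongrightarrow> 0) \<and> (AE \<omega> in M. (\<lambda>n. dist_Z n \<omega>) \<longlonglongrightarrow> 0)"
    using dist_Z_M dist_Z_nonneg mean tail by (rule convergence_of_rates)
  with mean tail show ?thesis
    unfolding dist_Z_def by blast
qed

lemma infdist_convergence:
  fixes \<theta> :: "real \<Rightarrow> real"
  assumes "mono_on {0..} \<theta>" and "convex_on {0..} \<theta>" and "\<theta> 0 = 0" and "\<forall>\<epsilon>>0. \<theta> \<epsilon> > 0"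
    and "\<forall>\<epsilon>>0. \<forall>a b. \<phi> a b < \<theta> \<epsilon> \<longrightarrow> dist a b < \<epsilon>"
  shows "((\<lambda>n. \<integral>\<^sup>+ \<omega>. ennreal (infdist (x n \<omega>) Z) \<partial>M) \<longlonglongrightarrow> 0)
    \<and> (AE \<omega> in M. (\<lambda>n. infdist (x n \<omega>) Z) \<longlonglongrightarrow> 0)
    \<and> (\<forall>\<epsilon>>0. \<forall>n\<ge>\<rho> (\<theta> \<epsilon>). (\<integral>\<^sup>+ \<omega>. ennreal (infdist (x n \<omega>) Z) \<partial>M) < ennreal \<epsilon>)
    \<and> (\<forall>lam>0. \<forall>\<epsilon>>0. measure M {\<omega>\<in>space M. \<exists>n\<ge>\<rho> (lam * \<theta> \<epsilon>). infdist (x n \<omega>) Z \<ge> \<epsilon>} < lam)"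
proof -
  have mean: "\<forall>\<epsilon>>0. \<forall>n\<ge>\<rho> (\<theta> \<epsilon>). (\<integral>\<^sup>+ \<omega>. ennreal (infdist (x n \<omega>) Z) \<partial>M) < ennreal \<epsilon>"
    using infdist_mean_rate[OF assms(2-5)] by blast
  have tail: "\<forall>lam>0. \<forall>\<epsilon>>0. prob {\<omega>\<in>space M. \<exists>n\<ge>\<rho> (lam * \<theta> \<epsilon>). \<epsilon> \<le> infdist (x n \<omega>) Z} < lam"
    using infdist_tail_prob_rate[OF assms(1,3-5)] by blast
  have "((\<lambda>n. \<integral>\<^sup>+ \<omega>. ennreal (infdist (x n \<omega>) Z) \<partial>M) \<longlonglongrightarrow> 0)
      \<and> (AE \<omega> in M. (\<lambda>n. infdist (x n \<omega>) Z) \<longlonglongrightarrow> 0)"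
    using infdist_Z_M infdist_nonneg mean tail by (rule convergence_of_rates)
  with mean tail show ?thesis
    by blast
qed

end

theorem theorem4p11:
  fixes M :: "'o measure" and Fs :: "nat \<Rightarrow> 'o measure"
    and F :: "'a::polish_space \<Rightarrow> ennreal" and \<phi> :: "'a \<Rightarrow> 'a \<Rightarrow> real"
    and x :: "nat \<Rightarrow> 'o \<Rightarrow> 'a" and \<zeta> \<xi> :: "nat \<Rightarrow> 'o \<Rightarrow> real"
    and K :: real and chi :: "real \<Rightarrow> nat" and \<psi> :: "real \<Rightarrow> nat \<Rightarrow> nat"
    and \<tau> :: "real \<Rightarrow> real" and D :: "('o \<Rightarrow> 'a) set"
    and \<rho> :: "real \<Rightarrow> nat"
  assumes M: "prob_space M"
    and F_meas: "F \<in> borel_measurable borel"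
    and zer_closed: "closed {z. F z = 0}"
    and zer_ne: "{z. F z = 0} \<noteq> {}"
    and phi: "caratheodory_distance \<phi>"
    and filt: "is_filtration M Fs"
    and adapted: "\<And>n. x n \<in> measurable (Fs n) borel"
    and zeta: "l1plus M Fs \<zeta>" and xi: "l1plus M Fs \<xi>"
    and fejer: "\<And>n z. F z = 0 \<Longrightarrow> AE \<omega> in M.
        nn_cond_exp M (Fs n) (\<lambda>\<omega>. ennreal (\<phi> z (x (Suc n) \<omega>))) \<omega>
          \<le> ennreal ((1 + \<zeta> n \<omega>) * \<phi> z (x n \<omega>) + \<xi> n \<omega>)"
    and K_pos: "K > 0"
    and K_bound: "AE \<omega> in M. (\<Prod>n. 1 + \<zeta> n \<omega>) < K"
    and chi: "\<And>\<epsilon>. \<epsilon> > 0 \<Longrightarrow> (\<Sum>n. \<integral>\<^sup>+ \<omega>. ennreal (\<xi> (n + chi \<epsilon>) \<omega>) \<partial>M) < ennreal \<epsilon>"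
    and liminf: "\<And>\<epsilon> N. \<epsilon> > 0 \<Longrightarrow>
        \<exists>n. N \<le> n \<and> n \<le> \<psi> \<epsilon> N \<and> (\<integral>\<^sup>+ \<omega>. F (x n \<omega>) \<partial>M) < ennreal \<epsilon>"
    and D_rv: "\<And>y. y \<in> D \<Longrightarrow> y \<in> measurable M borel"
    and x_D: "\<And>n. x n \<in> D"
    and tau_pos: "\<And>\<epsilon>. \<epsilon> > 0 \<Longrightarrow> \<tau> \<epsilon> > 0"
    and tau: "\<And>\<epsilon> y. \<epsilon> > 0 \<Longrightarrow> y \<in> D \<Longrightarrow>
        (\<integral>\<^sup>+ \<omega>. F (y \<omega>) \<partial>M) < ennreal (\<tau> \<epsilon>) \<Longrightarrow>
        (\<integral>\<^sup>+ \<omega>. ennreal (distphi \<phi> {z. F z = 0} (y \<omega>)) \<partial>M) < ennreal \<epsilon>"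
    and rho_def: "\<And>\<epsilon>. \<rho> \<epsilon> = \<psi> (\<tau> (\<epsilon> / (3 * K))) (chi (\<epsilon> / (3 * K)))"
  shows
    "((\<lambda>n. \<integral>\<^sup>+ \<omega>. ennreal (distphi \<phi> {z. F z = 0} (x n \<omega>)) \<partial>M) \<longlonglongrightarrow> 0)
     \<and> (AE \<omega> in M. (\<lambda>n. distphi \<phi> {z. F z = 0} (x n \<omega>)) \<longlonglongrightarrow> 0)
     \<and> (\<forall>\<epsilon>>0. \<forall>n\<ge>\<rho> \<epsilon>.
          (\<integral>\<^sup>+ \<omega>. ennreal (distphi \<phi> {z. F z = 0} (x n \<omega>)) \<partial>M) < ennreal \<epsilon>)
     \<and> (\<forall>lam>0. \<forall>\<epsilon>>0. measure M {\<omega>\<in>space M. \<exists>n\<ge>\<rho> (lam * \<epsilon>).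
          distphi \<phi> {z. F z = 0} (x n \<omega>) \<ge> \<epsilon>} < lam)
     \<and> (\<forall>\<theta> :: real \<Rightarrow> real.
          (mono_on {0..} \<theta> \<and> convex_on {0..} \<theta> \<and> \<theta> 0 = 0 \<and>
           (\<forall>\<epsilon>\<ge>0. \<theta> \<epsilon> \<ge> 0) \<and> (\<forall>\<epsilon>>0. \<theta> \<epsilon> > 0) \<and>
           (\<forall>\<epsilon>>0. \<forall>a b. \<phi> a b < \<theta> \<epsilon> \<longrightarrow> dist a b < \<epsilon>))
          \<longrightarrow>
          ((\<lambda>n. \<integral>\<^sup>+ \<omega>. ennreal (infdist (x n \<omega>) {z. F z = 0}) \<partial>M) \<longlonglongrightarrow> 0)
          \<and> (AE \<omega> in M. (\<lambda>n. infdist (x n \<omega>) {z. F z = 0}) \<longlonglongrightarrow> 0)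
          \<and> (\<forall>\<epsilon>>0. \<forall>n\<ge>\<rho> (\<theta> \<epsilon>).
               (\<integral>\<^sup>+ \<omega>. ennreal (infdist (x n \<omega>) {z. F z = 0}) \<partial>M) < ennreal \<epsilon>)
          \<and> (\<forall>lam>0. \<forall>\<epsilon>>0. measure M {\<omega>\<in>space M. \<exists>n\<ge>\<rho> (lam * \<theta> \<epsilon>).
               infdist (x n \<omega>) {z. F z = 0} \<ge> \<epsilon>} < lam))"
proof -
  interpret quasi_fejer_moduli M Fs \<phi> "{z. F z = 0}" x \<zeta> \<xi> F K chi \<psi> \<tau> \<rho>
    unfolding quasi_fejer_moduli_def quasi_fejer_def filtered_measure_def
      quasi_fejer_axioms_def quasi_fejer_moduli_axioms_def
    using M filt phi zer_ne adapted zeta xi fejer K_pos K_bound chi liminf tau_pos tau[OF _ x_D] rho_def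
    by blast
  show ?thesis (is "_ \<and> _ \<and> _ \<and> _ \<and> ?metric_distance_rates")
  proof -
    have ?metric_distance_rates
      by (intro allI impI) (elim conjE, rule infdist_convergence, assumption+)
    then show ?thesis
      using distphi_convergence by blast
  qed
qed

end
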